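(* Let $m\geq 1$, $n\geq 3$, and let $i,j\in V$. If $P$ is a walk of length $2n-1$ in $D^m_n$ from $i$ to $j$, then exactly one of the following occurs: (a) $i=1$ and $j=(k-1)(n-1)+n$ for some $k\in\{1,\ldots,m\}$, and $P=P_{1j}\circ C^s$ for some $s\in\{1,\ldots,m\}$, where $P_{1j}$ is the unique walk of length $n-1$ from $1$ to $j$; (b) $j=1$ and $i=(k-1)(n-1)+2$ for some $k\in\{1,\ldots,m\}$, and $P=C^s\circ P_{i1}$ for some $s\in\{1,\ldots,m\}$, where $P_{i1}$ is the unique walk of length $n-1$ from $i$ to $1$; (c) there exist $k,r\in\{1,\ldots,m\}$ and $\ell\in\{3,\ldots,n\}$ with $i=(k-1)(n-1)+\ell$ and $j=(r-1)(n-1)+(\ell-1)$, and $P=Q_{1j}\circ C^s\circ Q_{i1}$ for some $s\in\{1,\ldots,m\}$, where $Q_{i1}$ is the shortest walk from $i$ to $1$ and $Q_{1j}$ is the shortest walk from $1$ to $j$, and $Q_{1j}\circ Q_{i1}$ is the unique walk of length $n-1$ from $i$ to $j$.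
   Context: For integers $m\geq 1$, $n\geq 3$, the oriented Dutch windmill graph $D^m_n$ is the directed graph with vertex set $V=\{1,2,\ldots,m(n-1)+1\}$ whose directed edges $(a,b)$ are exactly: $(1,(k-1)(n-1)+2)$ for $k\in\{1,\ldots,m\}$; $((k-1)(n-1)+i,(k-1)(n-1)+i+1)$ for $k\in\{1,\ldots,m\}$ and $i\in\{2,\ldots,n-1\}$; and $((k-1)(n-1)+n,1)$ for $k\in\{1,\ldots,m\}$. A walk is a sequence of vertices $\langle v_1,\ldots,v_r\rangle$ in which each $(v_t,v_{t+1})$ is an edge; its length is $r-1$. For $k\in\{1,\ldots,m\}$, $C^k$ is the closed walk $\langle 1,(k-1)(n-1)+2,\ldots,(k-1)(n-1)+n,1\rangle$ of length $n$. If $P=\langle v_1,\ldots,v_r\rangle$ and $Q=\langle w_1,\ldots,w_s\rangle$ are walks with $w_1=v_r$, then $Q\circ P=\langle v_1,\ldots,v_r,w_2,\ldots,w_s\rangle$ (first traverse $P$, then $Q$). *)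

theory Defs
  imports Main
begin

text \<open>Oriented Dutch windmill graph D^m_n on vertices {1..m(n-1)+1}. Walks are
non-empty lists of vertices; the length of a walk is (number of vertices) - 1.\<close>

definition dw_vertices :: "nat \<Rightarrow> nat \<Rightarrow> nat set" where
  "dw_vertices m n = {1 .. m * (n - 1) + 1}"

definition dw_edge :: "nat \<Rightarrow> nat \<Rightarrow> nat \<Rightarrow> nat \<Rightarrow> bool" where
  "dw_edge m n a b \<longleftrightarrow>
     (\<exists>k\<in>{1..m}. a = 1 \<and> b = (k - 1) * (n - 1) + 2)
   \<or> (\<exists>k\<in>{1..m}. \<exists>i\<in>{2..n - 1}. a = (k - 1) * (n - 1) + i \<and> b = (k - 1) * (n - 1) + i + 1)
   \<or> (\<exists>k\<in>{1..m}. a = (k - 1) * (n - 1) + n \<and> b = 1)"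

fun edges_ok :: "(nat \<Rightarrow> nat \<Rightarrow> bool) \<Rightarrow> nat list \<Rightarrow> bool" where
  "edges_ok E (x # y # zs) = (E x y \<and> edges_ok E (y # zs))"
| "edges_ok E _ = True"

definition dw_walk :: "nat \<Rightarrow> nat \<Rightarrow> nat list \<Rightarrow> bool" where
  "dw_walk m n P \<longleftrightarrow> P \<noteq> [] \<and> set P \<subseteq> dw_vertices m n \<and> edges_ok (dw_edge m n) P"

definition walk_len :: "nat list \<Rightarrow> nat" where
  "walk_len P = length P - 1"

definition dw_walk_from_to :: "nat \<Rightarrow> nat \<Rightarrow> nat list \<Rightarrow> nat \<Rightarrow> nat \<Rightarrow> bool" where
  "dw_walk_from_to m n P a b \<longleftrightarrow> dw_walk m n P \<and> hd P = a \<and> last P = b"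

definition dw_shortest :: "nat \<Rightarrow> nat \<Rightarrow> nat list \<Rightarrow> nat \<Rightarrow> nat \<Rightarrow> bool" where
  "dw_shortest m n P a b \<longleftrightarrow> dw_walk_from_to m n P a b \<and>
     (\<forall>Q. dw_walk_from_to m n Q a b \<longrightarrow> walk_len P \<le> walk_len Q)"

text \<open>Composition Q \<circ> P: first traverse P, then Q (requires hd Q = last P).\<close>
definition wcomp :: "nat list \<Rightarrow> nat list \<Rightarrow> nat list" (infixr "\<circ>\<^sub>w" 65) where
  "Q \<circ>\<^sub>w P = P @ tl Q"

definition cyc :: "nat \<Rightarrow> nat \<Rightarrow> nat list" where
  "cyc n k = 1 # [(k - 1) * (n - 1) + 2 ..< (k - 1) * (n - 1) + n + 1] @ [1]"

end

theory Submission
  imports Defs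
begin

(* Every vertex other than the hub 1 has exactly one out-neighbour, its successor on its blade
   cycle C^k; the only choice a walk ever makes is which blade to enter when it leaves the hub.
   Hence a walk of length at most n starting at a position p >= 1 of C^k is a segment of C^k, and
   one starting at the hub is an initial segment of some C^r.  A walk of length 2n - 1 from the
   t-th vertex of a blade therefore runs down to the hub in n + 1 - t steps (none from the hub),
   traverses a full cycle C^s in n steps, and spends its remaining t - 2 steps (n - 1 from the
   hub) entering a blade; the cases i = 1, t = 2 and t >= 3 are (a), (b) and (c).  Uniqueness and
   minimality of the pieces come from the same rigidity and the injectivity of
   (k, t) |-> (k - 1)(n - 1) + t. *)

(* The t-th vertex (2 <= t <= n) of blade k; it sits at position t - 1 of cyc n k, whose
   positions 0 and n are the hub. *)
abbreviation blade :: "nat \<Rightarrow> nat \<Rightarrow> nat \<Rightarrow> nat" where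
  "blade n k t \<equiv> (k - 1) * (n - 1) + t"

lemma blade_eq_iff:
  assumes "n \<ge> 3" "k \<ge> 1" "k' \<ge> 1" "t \<in> {2..n}" "t' \<in> {2..n}"
  shows "blade n k t = blade n k' t' \<longleftrightarrow> k = k' \<and> t = t'"
proof
  assume eq: "blade n k t = blade n k' t'"
  define N where "N = n - 1"
  have N: "t - 2 < N" "t' - 2 < N" using assms by (auto simp: N_def)
  have "(k - 1) * N + (t - 2) = (k' - 1) * N + (t' - 2)"
    using eq assms unfolding N_def by auto
  then have "((k - 1) * N + (t - 2)) div N = ((k' - 1) * N + (t' - 2)) div N"
    and "((k - 1) * N + (t - 2)) mod N = ((k' - 1) * N + (t' - 2)) mod N" by simp_all
  with N have "k - 1 = k' - 1 \<and> t - 2 = t' - 2" by simp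
  then show "k = k' \<and> t = t'" using assms by auto
qed simp

lemma dw_vertex_cases:
  assumes "n \<ge> 3" "v \<in> dw_vertices m n"
  obtains (hub) "v = 1"
  | (first_blade_vertex) "\<exists>k\<in>{1..m}. v = blade n k 2"
  | (inner_blade_vertex) "\<exists>k\<in>{1..m}. \<exists>t\<in>{3..n}. v = blade n k t"
proof (cases "v = 1")
  case False
  define N where "N = n - 1"
  have v: "2 \<le> v" "v \<le> m * N + 1" using assms False by (auto simp: dw_vertices_def N_def)
  define q where "q = (v - 2) div N"
  define r where "r = (v - 2) mod N"
  have v_eq: "v - 2 = q * N + r" by (simp add: q_def r_def)
  have "r < N" using assms by (simp add: r_def N_def)
  have "q < m"
  proof (rule ccontr)
    assume "\<not> q < m"
    then have "m * N \<le> q * N" by simp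
    with v v_eq show False by linarith
  qed
  then have q: "Suc q \<in> {1..m}" by simp
  have v_blade: "v = blade n (Suc q) (r + 2)" using v v_eq by (simp add: N_def)
  show thesis
  proof (cases "r = 0")
    case True
    then have "v = blade n (Suc q) 2" using v_blade by simp
    then show thesis using that(2) q by blast
  next
    case False
    then have "r + 2 \<in> {3..n}" using \<open>r < N\<close> by (auto simp: N_def)
    then show thesis using that(3) q v_blade by blast
  qed
qed

lemma dw_edge_from_hub:
  assumes "n \<ge> 3" "dw_edge m n 1 b"
  shows "\<exists>k\<in>{1..m}. b = blade n k 2"
  using assms unfolding dw_edge_def by auto

lemma dw_edge_from_blade:
  assumes "n \<ge> 3" "k \<in> {1..m}" "t \<in> {2..n}" "dw_edge m n (blade n k t) b"
  shows "b = (if t < n then blade n k (t + 1) else 1)"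
  using assms(4) unfolding dw_edge_def
proof (elim disjE bexE conjE)
  fix k' i assume "k' \<in> {1..m}" "i \<in> {2..n - 1}" "blade n k t = blade n k' i" "b = blade n k' i + 1"
  with assms blade_eq_iff[of n k k' t i] show ?thesis by auto
next
  fix k' assume "k' \<in> {1..m}" "blade n k t = blade n k' n" "b = 1"
  with assms blade_eq_iff[of n k k' t n] show ?thesis by auto
qed (use assms(3) in auto)

lemma length_cyc: "n \<ge> 2 \<Longrightarrow> length (cyc n k) = n + 1"
  by (simp add: cyc_def)

lemma last_cyc [simp]: "last (cyc n k) = 1"
  by (simp add: cyc_def)

lemma nth_cyc:
  assumes "n \<ge> 2" "q \<le> n"
  shows "cyc n k ! q = (if q = 0 \<or> q = n then 1 else blade n k (q + 1))"
  using assms by (auto simp: cyc_def nth_append nth_Cons')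

lemma edges_ok_eq_successively [simp]: "edges_ok E = successively E"
proof
  fix xs show "edges_ok E xs = successively E xs"
    by (induction E xs rule: edges_ok.induct) auto
qed

lemma last_take_Suc: "L < length xs \<Longrightarrow> last (take (Suc L) xs) = xs ! L"
  by (simp add: take_Suc_conv_app_nth)

lemma length_eq_Suc_walk_len: "W \<noteq> [] \<Longrightarrow> length W = Suc (walk_len W)"
  by (simp add: walk_len_def)

lemma walk_len_wcomp: "P \<noteq> [] \<Longrightarrow> Q \<noteq> [] \<Longrightarrow> walk_len (Q \<circ>\<^sub>w P) = walk_len Q + walk_len P"
  by (cases P; cases Q) (auto simp: wcomp_def walk_len_def)

lemma wcomp_assoc: "C \<noteq> [] \<Longrightarrow> (Q \<circ>\<^sub>w C) \<circ>\<^sub>w P = Q \<circ>\<^sub>w C \<circ>\<^sub>w P"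
  by (simp add: wcomp_def)

lemma dw_walk_from_to_wcomp:
  assumes "dw_walk_from_to m n P a c" "dw_walk_from_to m n Q c b"
  shows "dw_walk_from_to m n (Q \<circ>\<^sub>w P) a b"
proof -
  obtain Q' where Q: "Q = c # Q'"
    using assms(2) by (cases Q) (auto simp: dw_walk_from_to_def dw_walk_def)
  have P: "P \<noteq> []" "set P \<subseteq> dw_vertices m n" "successively (dw_edge m n) P" "hd P = a" "last P = c"
    using assms(1) by (auto simp: dw_walk_from_to_def dw_walk_def)
  have Q': "set Q' \<subseteq> dw_vertices m n" "successively (dw_edge m n) (c # Q')" "last (c # Q') = b"
    using assms(2) by (auto simp: Q dw_walk_from_to_def dw_walk_def)
  have "successively (dw_edge m n) (P @ Q')"
    using P Q' by (auto simp: successively_append_iff successively_Cons)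
  moreover have "last (P @ Q') = b" using P(5) Q'(3) by (cases "Q' = []") auto
  ultimately show ?thesis
    using P Q' by (simp add: Q wcomp_def dw_walk_from_to_def dw_walk_def)
qed

lemma dw_walk_split:
  assumes "dw_walk_from_to m n P a b" "walk_len P = L1 + L2"
  obtains c P1 P2 where "dw_walk_from_to m n P1 a c" "walk_len P1 = L1"
    "dw_walk_from_to m n P2 c b" "walk_len P2 = L2" "P = P2 \<circ>\<^sub>w P1"
proof
  have "L1 < length P"
    using assms by (cases P) (auto simp: walk_len_def dw_walk_from_to_def dw_walk_def)
  show split: "P = drop L1 P \<circ>\<^sub>w take (Suc L1) P"
    by (simp add: wcomp_def) (metis append_take_drop_id drop_Suc tl_drop)
  have "successively (dw_edge m n) (take (Suc L1) P @ drop (Suc L1) P)"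
    and "successively (dw_edge m n) (take L1 P @ drop L1 P)"
    using assms(1) by (simp_all add: dw_walk_from_to_def dw_walk_def)
  then have "successively (dw_edge m n) (take (Suc L1) P)" "successively (dw_edge m n) (drop L1 P)"
    by (simp_all only: successively_append_iff)
  moreover have "set (take (Suc L1) P) \<subseteq> dw_vertices m n" "set (drop L1 P) \<subseteq> dw_vertices m n"
    using assms(1) set_take_subset[of "Suc L1" P] set_drop_subset[of L1 P]
    unfolding dw_walk_from_to_def dw_walk_def by blast+
  moreover have "P \<noteq> []" "hd P = a" "last P = b"
    using assms(1) by (simp_all add: dw_walk_from_to_def dw_walk_def)
  ultimately show "dw_walk_from_to m n (take (Suc L1) P) a (P ! L1)"
    and "dw_walk_from_to m n (drop L1 P) (P ! L1) b"
    using \<open>L1 < length P\<close> unfolding dw_walk_from_to_def dw_walk_def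
    by (simp_all add: last_take_Suc hd_drop_conv_nth)
  show "walk_len (take (Suc L1) P) = L1" "walk_len (drop L1 P) = L2"
    using assms(2) \<open>L1 < length P\<close> by (simp_all add: walk_len_def)
qed

lemma walk_follows_cycle:
  assumes "n \<ge> 3" "k \<in> {1..m}"
    and "successively (dw_edge m n) W" "W \<noteq> []" "hd W = cyc n k ! p" "1 \<le> p" "p + length W \<le> n + 1"
  shows "W = take (length W) (drop p (cyc n k))"
  using assms(3-)
proof (induction W arbitrary: p)
  case (Cons x W)
  have p_lt: "p < length (cyc n k)" using Cons.prems assms(1) by (simp add: length_cyc)
  have drop_p: "drop p (cyc n k) = cyc n k ! p # drop (Suc p) (cyc n k)"
    using p_lt by (rule Cons_nth_drop_Suc[symmetric])
  show ?case
  proof (cases W)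
    case (Cons y W')
    have "p < n" using Cons.prems \<open>W = y # W'\<close> by simp
    have x: "x = blade n k (p + 1)" using Cons.prems \<open>p < n\<close> assms(1) by (simp add: nth_cyc)
    have "dw_edge m n x y" using Cons.prems \<open>W = y # W'\<close> by simp
    then have "y = (if p + 1 < n then blade n k (p + 2) else 1)"
      using dw_edge_from_blade[OF assms(1,2), of "p + 1" y] x \<open>p < n\<close> \<open>1 \<le> p\<close> by simp
    then have "y = cyc n k ! Suc p" using \<open>p < n\<close> assms(1) by (simp add: nth_cyc)
    then have "W = take (length W) (drop (Suc p) (cyc n k))"
      using Cons.IH Cons.prems \<open>W = y # W'\<close> by simp
    then show ?thesis using Cons.prems drop_p by simp
  qed (use Cons.prems drop_p in simp)
qed simp

lemma walk_from_blade:
  assumes "n \<ge> 3" "k \<in> {1..m}" "t \<in> {2..n}"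
    and "dw_walk_from_to m n W (blade n k t) b" "walk_len W \<le> n + 1 - t"
  shows "W = take (Suc (walk_len W)) (drop (t - 1) (cyc n k))"
proof -
  have W: "W \<noteq> []" "successively (dw_edge m n) W" "hd W = blade n k t"
    using assms(4) by (auto simp: dw_walk_from_to_def dw_walk_def)
  have "hd W = cyc n k ! (t - 1)" using W(3) assms(1,3) by (auto simp: nth_cyc)
  moreover have "1 \<le> t - 1" "t - 1 + length W \<le> n + 1"
    using assms(3,5) W(1) by (auto simp: length_eq_Suc_walk_len)
  ultimately show ?thesis
    using walk_follows_cycle[OF assms(1,2) W(2,1)] W(1) by (simp add: length_eq_Suc_walk_len)
qed

lemma walk_from_hub:
  assumes "n \<ge> 3" "dw_walk_from_to m n W 1 b" "1 \<le> walk_len W" "walk_len W \<le> n"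
  shows "\<exists>r\<in>{1..m}. W = take (Suc (walk_len W)) (cyc n r)"
proof -
  have W: "W \<noteq> []" "successively (dw_edge m n) W" "hd W = 1"
    using assms(2) by (auto simp: dw_walk_from_to_def dw_walk_def)
  then obtain y W' where W_eq: "W = 1 # y # W'"
    using assms(3) by (cases W; cases "tl W") (auto simp: walk_len_def)
  with W(2) have "dw_edge m n 1 y" by simp
  then obtain r where r: "r \<in> {1..m}" "y = blade n r 2" using dw_edge_from_hub assms(1) by blast
  then have "hd (y # W') = cyc n r ! 1" using assms(1) by (simp add: nth_cyc)
  moreover have "successively (dw_edge m n) (y # W')" "1 + length (y # W') \<le> n + 1"
    using W(2) W_eq assms(4) by (auto simp: walk_len_def)
  ultimately have "y # W' = take (length (y # W')) (drop 1 (cyc n r))"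
    using walk_follows_cycle[OF assms(1) r(1)] by blast
  moreover have "cyc n r = 1 # drop 1 (cyc n r)" by (simp add: cyc_def)
  ultimately have "W = take (length W) (cyc n r)" using W_eq by (metis length_Cons take_Suc_Cons)
  then show ?thesis using r(1) W(1) by (auto simp: length_eq_Suc_walk_len)
qed

lemma last_take_cyc:
  assumes "n \<ge> 2" "1 \<le> L" "L < n"
  shows "last (take (Suc L) (cyc n r)) = blade n r (L + 1)"
  using assms by (simp add: last_take_Suc length_cyc nth_cyc)

lemma walk_hub_to_blade_unique:
  assumes "n \<ge> 3" "r \<in> {1..m}" "t \<in> {2..n}"
    and W: "dw_walk_from_to m n W 1 (blade n r t)" "walk_len W \<le> t - 1"
  shows "W = take t (cyc n r)"
proof -
  have W_ends: "W \<noteq> []" "hd W = 1" "last W = blade n r t"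
    using W(1) by (auto simp: dw_walk_from_to_def dw_walk_def)
  have "walk_len W \<noteq> 0"
  proof
    assume "walk_len W = 0"
    then have "W = [1]" using W_ends by (cases W) (auto simp: walk_len_def)
    then show False using W_ends assms(3) by simp
  qed
  moreover have "walk_len W \<le> n" using W(2) assms(3) by auto
  ultimately obtain r' where r': "r' \<in> {1..m}" "W = take (Suc (walk_len W)) (cyc n r')"
    using walk_from_hub[OF assms(1) W(1)] by auto
  moreover have "walk_len W < length (cyc n r')" using W(2) assms(1,3) by (auto simp: length_cyc)
  ultimately have "last W = cyc n r' ! walk_len W" by (metis last_take_Suc)
  then have "last W = blade n r' (walk_len W + 1)"
    using \<open>walk_len W \<noteq> 0\<close> W(2) assms(1,3) by (auto simp: nth_cyc)
  then have "r' = r \<and> walk_len W + 1 = t"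
    using blade_eq_iff[of n r' r "walk_len W + 1" t] \<open>walk_len W \<noteq> 0\<close> W_ends(3) W(2) r'(1) assms
    by auto
  then show ?thesis using r'(2) by simp
qed

lemma walk_blade_to_hub_unique:
  assumes "n \<ge> 3" "k \<in> {1..m}" "t \<in> {2..n}"
    and W: "dw_walk_from_to m n W (blade n k t) 1" "walk_len W \<le> n + 1 - t"
  shows "W = drop (t - 1) (cyc n k)"
proof -
  obtain L where L: "walk_len W = L" by simp
  have W_eq: "W = take (Suc L) (drop (t - 1) (cyc n k))"
    using walk_from_blade[OF assms] L by simp
  have "L < length (drop (t - 1) (cyc n k))"
    using W(2) L assms(1,3) by (auto simp: length_cyc)
  then have "last W = cyc n k ! (t - 1 + L)"
    unfolding W_eq by (simp add: last_take_Suc)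
  then have hub: "cyc n k ! (t - 1 + L) = 1"
    using W(1) by (simp add: dw_walk_from_to_def)
  have "t - 1 + L = n"
  proof (rule ccontr)
    assume "t - 1 + L \<noteq> n"
    moreover have "0 < t - 1 + L" "t - 1 + L \<le> n" using W(2) L assms(3) by auto
    ultimately have "cyc n k ! (t - 1 + L) = blade n k (t + L)"
      using nth_cyc[of n "t - 1 + L" k] assms(1,3) by auto
    then show False using hub assms(3) by simp
  qed
  then have "length (drop (t - 1) (cyc n k)) \<le> Suc L" using assms(1) by (simp add: length_cyc)
  then show ?thesis using W_eq by simp
qed

lemma walk_from_hub_starts_with_cycle:
  assumes "n \<ge> 3" "dw_walk_from_to m n P 1 b" "n \<le> walk_len P"
  obtains s R where "s \<in> {1..m}" "dw_walk_from_to m n R 1 b" "walk_len R = walk_len P - n"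
    "P = R \<circ>\<^sub>w cyc n s"
proof -
  have "walk_len P = n + (walk_len P - n)" using assms(3) by simp
  then obtain c C R where C: "dw_walk_from_to m n C 1 c" "walk_len C = n"
    and R: "dw_walk_from_to m n R c b" "walk_len R = walk_len P - n" "P = R \<circ>\<^sub>w C"
    by (rule dw_walk_split[OF assms(2)])
  obtain s where s: "s \<in> {1..m}" "C = take (Suc n) (cyc n s)"
    using walk_from_hub[OF assms(1) C(1)] C(2) assms(1) by auto
  then have C_eq: "C = cyc n s" using assms(1) by (simp add: length_cyc)
  then have "c = 1" using C(1) by (simp add: dw_walk_from_to_def)
  with that s(1) R C_eq show thesis by blast
qed

lemma walk_from_blade_through_hub:
  assumes "n \<ge> 3" "k \<in> {1..m}" "t \<in> {2..n}"
    and "dw_walk_from_to m n P (blade n k t) b" "n + 1 - t \<le> walk_len P"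
  obtains R where "dw_walk_from_to m n (drop (t - 1) (cyc n k)) (blade n k t) 1"
    "dw_walk_from_to m n R 1 b" "walk_len R = walk_len P - (n + 1 - t)"
    "P = R \<circ>\<^sub>w drop (t - 1) (cyc n k)"
proof -
  have "walk_len P = (n + 1 - t) + (walk_len P - (n + 1 - t))" using assms(5) by simp
  then obtain c H R where H: "dw_walk_from_to m n H (blade n k t) c" "walk_len H = n + 1 - t"
    and R: "dw_walk_from_to m n R c b" "walk_len R = walk_len P - (n + 1 - t)" "P = R \<circ>\<^sub>w H"
    by (rule dw_walk_split[OF assms(4)])
  have "H = take (Suc (n + 1 - t)) (drop (t - 1) (cyc n k))"
    using walk_from_blade[OF assms(1-3) H(1)] H(2) by simp
  then have H_eq: "H = drop (t - 1) (cyc n k)" using assms(1,3) by (simp add: length_cyc)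
  have "t - 1 < length (cyc n k)" using assms(1,3) by (auto simp: length_cyc)
  then have "c = 1" using H(1) H_eq by (simp add: dw_walk_from_to_def)
  with that H(1) R H_eq show thesis by blast
qed

definition dw_unique_walk :: "nat \<Rightarrow> nat \<Rightarrow> nat list \<Rightarrow> nat \<Rightarrow> nat \<Rightarrow> nat \<Rightarrow> bool" where
  "dw_unique_walk m n W a b L \<longleftrightarrow> dw_walk_from_to m n W a b \<and> walk_len W = L \<and>
     (\<forall>W'. dw_walk_from_to m n W' a b \<and> walk_len W' = L \<longrightarrow> W' = W)"

definition dw_unique_shortest :: "nat \<Rightarrow> nat \<Rightarrow> nat list \<Rightarrow> nat \<Rightarrow> nat \<Rightarrow> bool" where
  "dw_unique_shortest m n W a b \<longleftrightarrow> dw_shortest m n W a b \<and> (\<forall>Q. dw_shortest m n Q a b \<longrightarrow> Q = W)"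

lemma dw_unique_shortestI:
  assumes "dw_walk_from_to m n W a b"
    and "\<And>W'. dw_walk_from_to m n W' a b \<Longrightarrow> walk_len W' \<le> walk_len W \<Longrightarrow> W' = W"
  shows "dw_unique_shortest m n W a b"
proof -
  have "walk_len W \<le> walk_len Q" if "dw_walk_from_to m n Q a b" for Q
    using assms(2)[OF that] by fastforce
  with assms show ?thesis by (auto simp: dw_unique_shortest_def dw_shortest_def)
qed

lemma walk_through_hub_unique:
  assumes "n \<ge> 3" "k \<in> {1..m}" "r \<in> {1..m}" "t \<in> {3..n}"
    and W: "dw_walk_from_to m n W (blade n k t) (blade n r (t - 1))" "walk_len W = n - 1"
  shows "W = take (t - 1) (cyc n r) \<circ>\<^sub>w drop (t - 1) (cyc n k)"
proof -
  have t: "t \<in> {2..n}" "t - 1 \<in> {2..n}" using assms(4) by auto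
  have "n + 1 - t \<le> walk_len W" using assms(4) W(2) by auto
  then obtain R where "dw_walk_from_to m n (drop (t - 1) (cyc n k)) (blade n k t) 1"
    and R: "dw_walk_from_to m n R 1 (blade n r (t - 1))"
    "walk_len R = walk_len W - (n + 1 - t)" "W = R \<circ>\<^sub>w drop (t - 1) (cyc n k)"
    by (rule walk_from_blade_through_hub[OF assms(1,2) t(1) W(1)])
  moreover have "walk_len R \<le> t - 1 - 1" using R(2) W(2) assms(4) by auto
  ultimately show ?thesis using walk_hub_to_blade_unique[OF assms(1,3) t(2)] by simp
qed

lemma dw_walk_2n_from_hub:
  assumes "n \<ge> 3" "dw_walk_from_to m n P 1 j" "walk_len P = 2 * n - 1"
  shows "(\<exists>k\<in>{1..m}. j = blade n k n) \<and>
    (\<exists>W. dw_unique_walk m n W 1 j (n - 1) \<and> (\<exists>s\<in>{1..m}. P = W \<circ>\<^sub>w cyc n s))"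
proof -
  have "n \<le> walk_len P" using assms(1,3) by simp
  then obtain s R where s: "s \<in> {1..m}" and R: "dw_walk_from_to m n R 1 j" "walk_len R = walk_len P - n"
    and P: "P = R \<circ>\<^sub>w cyc n s"
    by (rule walk_from_hub_starts_with_cycle[OF assms(1,2)])
  then have R_len: "walk_len R = n - 1" using assms(3) by simp
  moreover have "1 \<le> walk_len R" "walk_len R \<le> n" using R_len assms(1) by simp_all
  ultimately obtain r where r: "r \<in> {1..m}" "R = take (Suc (n - 1)) (cyc n r)"
    using walk_from_hub[OF assms(1) R(1)] by auto
  then have j: "j = blade n r n"
    using R(1) last_take_cyc[of n "n - 1" r] assms(1) by (simp add: dw_walk_from_to_def)
  have "W' = R" if "dw_walk_from_to m n W' 1 j" "walk_len W' = n - 1" for W'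
    using walk_hub_to_blade_unique[OF assms(1) r(1), of n W'] that j r(2) assms(1) by simp
  then have "dw_unique_walk m n R 1 j (n - 1)"
    using R(1) R_len unfolding dw_unique_walk_def by blast
  then show ?thesis using j r(1) s P by blast
qed

lemma dw_walk_2n_from_blade_start:
  assumes "n \<ge> 3" "\<exists>k\<in>{1..m}. i = blade n k 2" "dw_walk_from_to m n P i j" "walk_len P = 2 * n - 1"
  shows "j = 1 \<and> (\<exists>W. dw_unique_walk m n W i 1 (n - 1) \<and> (\<exists>s\<in>{1..m}. P = cyc n s \<circ>\<^sub>w W))"
proof -
  obtain k where k: "k \<in> {1..m}" "i = blade n k 2" using assms(2) by blast
  let ?H = "drop 1 (cyc n k)"
  have two: "2 \<in> {2..n}" and "n + 1 - 2 \<le> walk_len P" using assms(1,4) by auto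
  then obtain R where H: "dw_walk_from_to m n ?H i 1"
    and R: "dw_walk_from_to m n R 1 j" "walk_len R = walk_len P - (n + 1 - 2)" and P: "P = R \<circ>\<^sub>w ?H"
    using walk_from_blade_through_hub[OF assms(1) k(1) two] assms(3) k(2) by auto
  have "n \<le> walk_len R" using R(2) assms(4) by simp
  then obtain s R' where s: "s \<in> {1..m}"
    and R': "dw_walk_from_to m n R' 1 j" "walk_len R' = walk_len R - n" and "R = R' \<circ>\<^sub>w cyc n s"
    by (rule walk_from_hub_starts_with_cycle[OF assms(1) R(1)])
  moreover have "walk_len R - n = 0" using R(2) assms(4) by simp
  ultimately have "R' = [1]" "j = 1"
    by (cases R'; simp add: walk_len_def dw_walk_from_to_def dw_walk_def)+
  with P \<open>R = R' \<circ>\<^sub>w cyc n s\<close> have "P = cyc n s \<circ>\<^sub>w ?H" by (simp add: wcomp_def)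
  have "walk_len ?H = n - 1" using assms(1) by (simp add: walk_len_def length_cyc)
  moreover have "W' = ?H" if "dw_walk_from_to m n W' i 1" "walk_len W' = n - 1" for W'
    using walk_blade_to_hub_unique[OF assms(1) k(1) two] that k(2) by simp
  ultimately have "dw_unique_walk m n ?H i 1 (n - 1)"
    using H unfolding dw_unique_walk_def by blast
  with \<open>j = 1\<close> s \<open>P = cyc n s \<circ>\<^sub>w ?H\<close> show ?thesis by blast
qed

lemma dw_walk_2n_from_inner_blade:
  assumes "n \<ge> 3" "\<exists>k\<in>{1..m}. \<exists>t\<in>{3..n}. i = blade n k t"
    and "dw_walk_from_to m n P i j" "walk_len P = 2 * n - 1"
  shows "(\<exists>k\<in>{1..m}. \<exists>r\<in>{1..m}. \<exists>l\<in>{3..n}. i = blade n k l \<and> j = blade n r (l - 1)) \<and>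
    (\<exists>Qi1 Q1j. dw_unique_shortest m n Qi1 i 1 \<and> dw_unique_shortest m n Q1j 1 j \<and>
       dw_unique_walk m n (Q1j \<circ>\<^sub>w Qi1) i j (n - 1) \<and>
       (\<exists>s\<in>{1..m}. P = Q1j \<circ>\<^sub>w cyc n s \<circ>\<^sub>w Qi1))"
proof -
  obtain k t where k: "k \<in> {1..m}" "t \<in> {3..n}" "i = blade n k t" using assms(2) by blast
  let ?H = "drop (t - 1) (cyc n k)"
  have t: "t \<in> {2..n}" "t - 1 \<in> {2..n}" and "n + 1 - t \<le> walk_len P" using k(2) assms(4) by auto
  then obtain R where H: "dw_walk_from_to m n ?H i 1"
    and R: "dw_walk_from_to m n R 1 j" "walk_len R = walk_len P - (n + 1 - t)" and P: "P = R \<circ>\<^sub>w ?H"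
    using walk_from_blade_through_hub[OF assms(1) k(1) t(1)] assms(3) k(3) by auto
  have "n \<le> walk_len R" using R(2) k(2) assms(4) by auto
  then obtain s Q where s: "s \<in> {1..m}"
    and Q: "dw_walk_from_to m n Q 1 j" "walk_len Q = walk_len R - n" and "R = Q \<circ>\<^sub>w cyc n s"
    by (rule walk_from_hub_starts_with_cycle[OF assms(1) R(1)])
  have Q_len: "walk_len Q = t - 2" using Q(2) R(2) k(2) assms(4) by auto
  then have "1 \<le> walk_len Q" "walk_len Q \<le> n" using k(2) by auto
  then obtain r where r: "r \<in> {1..m}" "Q = take (Suc (t - 2)) (cyc n r)"
    using walk_from_hub[OF assms(1) Q(1)] Q_len by auto
  have Q_eq: "Q = take (t - 1) (cyc n r)" using r(2) k(2) by (simp add: Suc_diff_Suc numeral_2_eq_2)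
  have "t - 2 + 1 = t - 1" using k(2) by auto
  then have j: "j = blade n r (t - 1)"
    using Q(1) r(2) last_take_cyc[of n "t - 2" r] assms(1) k(2) by (auto simp: dw_walk_from_to_def)
  have H_len: "walk_len ?H = n + 1 - t" using assms(1) k(2) by (auto simp: walk_len_def length_cyc)
  have "dw_unique_shortest m n ?H i 1"
    by (rule dw_unique_shortestI[OF H]) (use walk_blade_to_hub_unique[OF assms(1) k(1) t(1)] H_len k(3) in simp)
  moreover have "dw_unique_shortest m n Q 1 j"
    by (rule dw_unique_shortestI[OF Q(1)])
      (use walk_hub_to_blade_unique[OF assms(1) r(1) t(2)] Q_len Q_eq j in simp)
  moreover have "dw_unique_walk m n (Q \<circ>\<^sub>w ?H) i j (n - 1)"
  proof -
    have "?H \<noteq> []" "Q \<noteq> []" using H Q(1) by (simp_all add: dw_walk_from_to_def dw_walk_def)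
    then have "walk_len (Q \<circ>\<^sub>w ?H) = n - 1" using Q_len H_len k(2) by (auto simp: walk_len_wcomp)
    then show ?thesis
      using dw_walk_from_to_wcomp[OF H Q(1)] walk_through_hub_unique[OF assms(1) k(1) r(1) k(2)] Q_eq j k(3)
      unfolding dw_unique_walk_def by blast
  qed
  moreover have "P = Q \<circ>\<^sub>w cyc n s \<circ>\<^sub>w ?H"
    using P \<open>R = Q \<circ>\<^sub>w cyc n s\<close> by (simp add: wcomp_assoc cyc_def)
  ultimately show ?thesis using j r(1) s k by blast
qed

theorem lemma2p3:
  fixes m n i j :: nat and P :: "nat list"
  assumes "m \<ge> 1" and "n \<ge> 3"
    and "i \<in> dw_vertices m n" and "j \<in> dw_vertices m n"
    and "dw_walk_from_to m n P i j" and "walk_len P = 2 * n - 1"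
  defines "A \<equiv> i = 1 \<and> (\<exists>k\<in>{1..m}. j = (k - 1) * (n - 1) + n) \<and>
      (\<exists>W. dw_walk_from_to m n W 1 j \<and> walk_len W = n - 1 \<and>
           (\<forall>W'. dw_walk_from_to m n W' 1 j \<and> walk_len W' = n - 1 \<longrightarrow> W' = W) \<and>
           (\<exists>s\<in>{1..m}. P = W \<circ>\<^sub>w cyc n s))"
    and "B \<equiv> j = 1 \<and> (\<exists>k\<in>{1..m}. i = (k - 1) * (n - 1) + 2) \<and>
      (\<exists>W. dw_walk_from_to m n W i 1 \<and> walk_len W = n - 1 \<and>
           (\<forall>W'. dw_walk_from_to m n W' i 1 \<and> walk_len W' = n - 1 \<longrightarrow> W' = W) \<and>
           (\<exists>s\<in>{1..m}. P = cyc n s \<circ>\<^sub>w W))"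
    and "C \<equiv> (\<exists>k\<in>{1..m}. \<exists>r\<in>{1..m}. \<exists>l\<in>{3..n}.
         i = (k - 1) * (n - 1) + l \<and> j = (r - 1) * (n - 1) + (l - 1)) \<and>
      (\<exists>Qi1 Q1j. dw_shortest m n Qi1 i 1 \<and>
           (\<forall>Q. dw_shortest m n Q i 1 \<longrightarrow> Q = Qi1) \<and>
           dw_shortest m n Q1j 1 j \<and>
           (\<forall>Q. dw_shortest m n Q 1 j \<longrightarrow> Q = Q1j) \<and>
           dw_walk_from_to m n (Q1j \<circ>\<^sub>w Qi1) i j \<and> walk_len (Q1j \<circ>\<^sub>w Qi1) = n - 1 \<and>
           (\<forall>W'. dw_walk_from_to m n W' i j \<and> walk_len W' = n - 1 \<longrightarrow> W' = Q1j \<circ>\<^sub>w Qi1) \<and>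
           (\<exists>s\<in>{1..m}. P = Q1j \<circ>\<^sub>w cyc n s \<circ>\<^sub>w Qi1))"
  shows "(A \<and> \<not> B \<and> \<not> C) \<or> (\<not> A \<and> B \<and> \<not> C) \<or> (\<not> A \<and> \<not> B \<and> C)"
proof -
  have "A \<Longrightarrow> i = 1 \<and> (\<exists>k. j = blade n k n)" "B \<Longrightarrow> j = 1 \<and> (\<exists>k. i = blade n k 2)"
    "C \<Longrightarrow> \<exists>k r l. l \<in> {3..n} \<and> i = blade n k l \<and> j = blade n r (l - 1)"
    unfolding A_def B_def C_def by blast+
  then have A_ends: "A \<Longrightarrow> i = 1 \<and> j \<noteq> 1" and B_ends: "B \<Longrightarrow> j = 1 \<and> i \<noteq> 1"
    and C_ends: "C \<Longrightarrow> i \<noteq> 1 \<and> j \<noteq> 1"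
    using assms(2) by fastforce+
  have "A \<or> B \<or> C"
    using assms(2,3)
  proof (cases rule: dw_vertex_cases)
    case hub
    with dw_walk_2n_from_hub[OF assms(2) _ assms(6)] assms(5) have A
      unfolding A_def dw_unique_walk_def conj_assoc by (simp only: simp_thms)
    then show ?thesis ..
  next
    case first_blade_vertex
    with dw_walk_2n_from_blade_start[OF assms(2) _ assms(5,6)] have B
      unfolding B_def dw_unique_walk_def conj_assoc by (simp only: simp_thms)
    then show ?thesis by blast
  next
    case inner_blade_vertex
    with dw_walk_2n_from_inner_blade[OF assms(2) _ assms(5,6)] have C
      unfolding C_def dw_unique_shortest_def dw_unique_walk_def conj_assoc by (simp only: simp_thms)
    then show ?thesis by blast
  qed
  then show ?thesis using A_ends B_ends C_ends by blast
qed

end
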